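(* Consider the discrete-time control system $x_{k+1}=f(x_k,u_k)$ with reward $r(x,u)=R-x^TQx$ and optimal discounted value $V_\gamma(x)=\sup_{\mathbf u}\sum_{k\ge0}\gamma^k r(\Psi(k,x,\mathbf u(k)),\mathbf u(k))$. Suppose the system is exponentially stabilizable in the following sense: there exist $M>0$ and $\lambda>0$ such that for each $x\in\mathbb R^n$ there is an infinite control sequence $\mathbf u$ with $R-r(\Psi(k,x,\mathbf u(k)),\mathbf u(k))\le M\|x\|^2e^{-\lambda k}$ for all $k\ge0$. Then for every $\gamma\in(0,1)$ and every $x\in\mathbb R^n$, $\frac{R}{1-\gamma}-V_\gamma(x)\le a_V\|x\|^2$ with $a_V=\frac{M}{1-e^{-\lambda}}$.
   Context: $x_k\in\mathbb R^n$, $u_k\in\mathcal U\subset\mathbb R^m$; $\Psi(k,x,\mathbf u(k))$ is the state at time $k$ starting from $x$ under the control sequence $\mathbf u$, and $\mathbf u(k)$ is its $k$-th input. $R>0$ is a constant and $Q$ is positive definite. *)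

theory Defs
  imports "HOL-Analysis.Analysis" "HOL-Library.Extended_Real"
begin

primrec Psi :: "('x \<Rightarrow> 'u \<Rightarrow> 'x) \<Rightarrow> nat \<Rightarrow> 'x \<Rightarrow> (nat \<Rightarrow> 'u) \<Rightarrow> 'x" where
  "Psi f 0 x u = x"
| "Psi f (Suc k) x u = f (Psi f k x u) (u k)"

definition reward :: "real \<Rightarrow> real^'n^'n \<Rightarrow> real^'n \<Rightarrow> 'u \<Rightarrow> real" where
  "reward R Q x v = R - x \<bullet> (Q *v x)"

definition pos_def :: "real^'n^'n \<Rightarrow> bool" where
  "pos_def Q \<longleftrightarrow> transpose Q = Q \<and> (\<forall>x. x \<noteq> 0 \<longrightarrow> x \<bullet> (Q *v x) > 0)"

definition controls :: "'u set \<Rightarrow> (nat \<Rightarrow> 'u) set" where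
  "controls U = {u. \<forall>k. u k \<in> U}"

text \<open>Discounted return: the infinite series as the limit of its partial sums,
  taken in the extended reals (it may diverge to minus infinity).\<close>
definition disc_return ::
  "('x \<Rightarrow> 'u \<Rightarrow> 'x) \<Rightarrow> ('x \<Rightarrow> 'u \<Rightarrow> real) \<Rightarrow> real \<Rightarrow> 'x \<Rightarrow> (nat \<Rightarrow> 'u) \<Rightarrow> ereal" where
  "disc_return f r \<gamma> x u =
     lim (\<lambda>N. ereal (\<Sum>k<N. \<gamma> ^ k * r (Psi f k x u) (u k)))"

definition V_opt ::
  "('x \<Rightarrow> 'u \<Rightarrow> 'x) \<Rightarrow> ('x \<Rightarrow> 'u \<Rightarrow> real) \<Rightarrow> 'u set \<Rightarrow> real \<Rightarrow> 'x \<Rightarrow> ereal" where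
  "V_opt f r U \<gamma> x = (SUP u \<in> controls U. disc_return f r \<gamma> x u)"

end

theory Submission
  imports Defs
begin

text \<open>Proof idea: the discounted return of any control splits as
  \<open>R/(1-\<gamma>)\<close> minus the discounted sum of the per-step regrets \<open>R - r\<close>.
  Along the stabilizing control the regrets are nonnegative and dominated by the geometric
  sequence \<open>M \<parallel>x\<parallel>\<^sup>2 (e\<^sup>-\<^sup>\<lambda>)\<^sup>k\<close>, and since \<open>\<gamma>\<^sup>k \<le> 1\<close> their discounted sum is at most
  \<open>M \<parallel>x\<parallel>\<^sup>2 / (1 - e\<^sup>-\<^sup>\<lambda>)\<close>; the optimal value is at least this particular return.\<close>

lemma pos_def_quadratic_form_nonneg:
  assumes "pos_def Q"
  shows "0 \<le> x \<bullet> (Q *v x)"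
  using assms unfolding pos_def_def by (cases "x = 0") (auto intro: less_imp_le)

lemma disc_return_eq_if_sums:
  assumes "(\<lambda>k. \<gamma> ^ k * r (Psi f k x u) (u k)) sums s"
  shows "disc_return f r \<gamma> x u = ereal s"
proof -
  have "(\<lambda>N. ereal (\<Sum>k<N. \<gamma> ^ k * r (Psi f k x u) (u k))) \<longlonglongrightarrow> ereal s"
    using assms unfolding sums_def by (simp add: tendsto_ereal)
  then show ?thesis
    unfolding disc_return_def by (rule limI)
qed

lemma discounted_sum_le_geometric:
  fixes d :: "nat \<Rightarrow> real"
  assumes "0 \<le> \<gamma>" "\<gamma> \<le> 1" "\<bar>q\<bar> < 1"
    and d_nonneg: "\<And>k. 0 \<le> d k" and d_le: "\<And>k. d k \<le> a * q ^ k"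
  shows "summable (\<lambda>k. \<gamma> ^ k * d k)" and "(\<Sum>k. \<gamma> ^ k * d k) \<le> a / (1 - q)"
proof -
  have discounted_le: "\<gamma> ^ k * d k \<le> a * q ^ k" for k
    using mult_right_mono[OF power_le_one[OF assms(1,2)] d_nonneg[of k]] d_le[of k]
    by (metis mult_1 order_trans)
  have geom_sums: "(\<lambda>k. a * q ^ k) sums (a / (1 - q))"
    using sums_mult[OF geometric_sums[of q], of a] assms(3) by simp
  show summable: "summable (\<lambda>k. \<gamma> ^ k * d k)"
    using discounted_le d_nonneg assms(1)
    by (intro summable_comparison_test'[OF sums_summable[OF geom_sums], of 0]) auto
  show "(\<Sum>k. \<gamma> ^ k * d k) \<le> a / (1 - q)"
    using suminf_le[OF discounted_le summable sums_summable[OF geom_sums]] sums_unique[OF geom_sums]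
    by simp
qed

lemma V_opt_regret_le:
  assumes "u \<in> controls U" "0 \<le> \<gamma>" "\<gamma> < 1" "\<bar>q\<bar> < 1"
    and regret_nonneg: "\<And>k. r (Psi f k x u) (u k) \<le> R"
    and regret_le: "\<And>k. R - r (Psi f k x u) (u k) \<le> a * q ^ k"
  shows "ereal (R / (1 - \<gamma>)) - V_opt f r U \<gamma> x \<le> ereal (a / (1 - q))"
proof -
  define d where "d k = R - r (Psi f k x u) (u k)" for k
  have d_summable: "summable (\<lambda>k. \<gamma> ^ k * d k)"
    and d_sum_le: "(\<Sum>k. \<gamma> ^ k * d k) \<le> a / (1 - q)"
    using discounted_sum_le_geometric[of \<gamma> q d a] assms regret_nonneg regret_le
    by (auto simp: d_def)
  have "(\<lambda>k. R * \<gamma> ^ k) sums (R / (1 - \<gamma>))"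
    using sums_mult[OF geometric_sums[of \<gamma>], of R] assms(2,3) by simp
  from sums_diff[OF this summable_sums[OF d_summable]]
  have "(\<lambda>k. \<gamma> ^ k * r (Psi f k x u) (u k)) sums (R / (1 - \<gamma>) - (\<Sum>k. \<gamma> ^ k * d k))"
    by (simp add: d_def algebra_simps)
  then have "ereal (R / (1 - \<gamma>) - (\<Sum>k. \<gamma> ^ k * d k)) \<le> V_opt f r U \<gamma> x"
    unfolding V_opt_def using assms(1) by (metis disc_return_eq_if_sums SUP_upper)
  then have "ereal (R / (1 - \<gamma>)) - V_opt f r U \<gamma> x
      \<le> ereal (R / (1 - \<gamma>)) - ereal (R / (1 - \<gamma>) - (\<Sum>k. \<gamma> ^ k * d k))"
    by (intro ereal_minus_mono) auto
  also have "\<dots> \<le> ereal (a / (1 - q))"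
    using d_sum_le by simp
  finally show ?thesis .
qed

theorem proposition4:
  fixes f :: "real^'n \<Rightarrow> real^'m \<Rightarrow> real^'n"
    and U :: "(real^'m) set"
    and Q :: "real^'n^'n"
    and R M lam :: real
  assumes "R > 0" and "pos_def Q"
    and "M > 0" and "lam > 0"
    and stab: "\<forall>x. \<exists>u \<in> controls U. \<forall>k.
       R - reward R Q (Psi f k x u) (u k) \<le> M * (norm x)\<^sup>2 * exp (- lam * real k)"
  shows "\<forall>\<gamma>::real. 0 < \<gamma> \<and> \<gamma> < 1 \<longrightarrow> (\<forall>x.
     ereal (R / (1 - \<gamma>)) - V_opt f (reward R Q) U \<gamma> x
       \<le> ereal ((M / (1 - exp (- lam))) * (norm x)\<^sup>2))"
proof (intro allI impI)
  fix \<gamma> :: real and x :: "real^'n"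
  assume \<gamma>: "0 < \<gamma> \<and> \<gamma> < 1"
  obtain u where "u \<in> controls U" and stab_u: "\<And>k.
       R - reward R Q (Psi f k x u) (u k) \<le> M * (norm x)\<^sup>2 * exp (- lam * real k)"
    using stab by blast
  have "\<And>k. reward R Q (Psi f k x u) (u k) \<le> R"
    using pos_def_quadratic_form_nonneg[OF \<open>pos_def Q\<close>] by (simp add: reward_def)
  moreover have "\<And>k. R - reward R Q (Psi f k x u) (u k) \<le> M * (norm x)\<^sup>2 * exp (- lam) ^ k"
    using stab_u by (simp add: exp_of_nat_mult[symmetric] mult.commute)
  moreover have "\<bar>exp (- lam)\<bar> < 1"
    using \<open>lam > 0\<close> by simp
  ultimately have "ereal (R / (1 - \<gamma>)) - V_opt f (reward R Q) U \<gamma> x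
      \<le> ereal (M * (norm x)\<^sup>2 / (1 - exp (- lam)))"
    using \<gamma> by (intro V_opt_regret_le[OF \<open>u \<in> controls U\<close>]) auto
  then show "ereal (R / (1 - \<gamma>)) - V_opt f (reward R Q) U \<gamma> x
       \<le> ereal ((M / (1 - exp (- lam))) * (norm x)\<^sup>2)"
    by simp
qed

end
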